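(* Let $A=(a,\ ha+d,\ ha+2d,\ ha+4d,\ \dots,\ ha+2kd)$ where $\gcd(a,d)=1$, $a,h,d,k\in\mathbb{P}$, $a>2$, $2\le 2k\le a-1$. Then: (i) if $a$ is even, write $a-1=2ks+t$ with $1\le t\le 2k$; then $$g(A)=\begin{cases}ha\big(\lfloor\frac{a-2}{2k}\rfloor+2\big)+(a-1)d-a & \text{if } t\ne1,\\ ha\big(\frac{a-2}{2k}+1\big)+(a-1)d-a & \text{if } t=1;\end{cases}$$ (ii) if $a$ is odd, write $a-2=2ks+t$ with $1\le t\le 2k$; then $$g(A)=\begin{cases}\max\Big\{ha\big(\lfloor\frac{a-2}{2k}\rfloor+1\big)+(a-1)d-a,\ ha\big(\lfloor\frac{a-3}{2k}\rfloor+2\big)+(a-2)d-a\Big\} & \text{if } t\ne1,\\ ha\big(\lfloor\frac{a-2}{2k}\rfloor+1\big)+(a-1)d-a & \text{if } t=1.\end{cases}$$ Moreover, with $s=\lfloor\frac{a-2}{2k}\rfloor$ and $t=a-1-2k\lfloor\frac{a-2}{2k}\rfloor$, $$n(A)=h(s^2k+st-s-1)+(a-1)\Big(h+\frac d2-\frac12\Big)+h\Big\lceil\frac t2\Big\rceil.$$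
   Context: For a tuple $A$ of positive integers with $\gcd(A)=1$, $\mathcal{NR}(A)$ is the finite set of nonnegative integers that cannot be written as a nonnegative integer combination of the entries of $A$; $g(A)=\max\mathcal{NR}(A)$ and $n(A)=|\mathcal{NR}(A)|$. $\mathbb{P}=\{1,2,\dots\}$. *)

theory Defs
  imports Complex_Main
begin

definition representable :: "nat list \<Rightarrow> nat \<Rightarrow> bool" where
  "representable A m \<longleftrightarrow>
     (\<exists>c :: nat list. length c = length A \<and> m = (\<Sum>i<length A. c ! i * A ! i))"

definition NR :: "nat list \<Rightarrow> nat set" where
  "NR A = {m. \<not> representable A m}"

definition frob :: "nat list \<Rightarrow> int" where
  "frob A = int (Max (NR A))"

definition genus :: "nat list \<Rightarrow> nat" where
  "genus A = card (NR A)"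

definition tupA :: "nat \<Rightarrow> nat \<Rightarrow> nat \<Rightarrow> nat \<Rightarrow> nat list" where
  "tupA a h d k = a # (h*a + d) # map (\<lambda>j. h*a + 2*j*d) [1..<k+1]"

end

theory Submission
  imports Defs "HOL-Number_Theory.Pocklington"
begin

(* Every element of the semigroup generated by A = (a, ha+d, ha+2d, ..., ha+2kd) has the form
   c a + (u+v) h a + (u+2y) d with v <= y <= k v: u copies of ha+d and v generators ha+2jd whose
   indices j sum to y. Hence the least element congruent to x d modulo a (x < a) is
   w(x) = m(x) h a + x d, where m(x) = (x mod 2) + ceiling((x div 2) / k) is the least number of
   non-a generators whose d-parts add up to x d. As gcd(a, d) = 1 these w(x) form the Apery set
   of A with respect to a, so Selmer's formulas give g(A) = max w(x) - a and
   n(A) = sum of floor(w(x) / a). Since m is monotone on each parity class the maximum is w(a-1)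
   or w(a-2); for the genus, m grows by one per period of length 2k, and
   sum_{x<a} floor(x d / a) = (a-1)(d-1)/2. *)

lemma representable_0: "representable A 0"
  unfolding representable_def
  by (rule exI[of _ "replicate (length A) 0"]) simp

lemma representable_add:
  assumes "representable A m" and "representable A n"
  shows "representable A (m + n)"
proof -
  obtain c where c: "length c = length A" "m = (\<Sum>i<length A. c ! i * A ! i)"
    using assms(1) unfolding representable_def by blast
  obtain e where e: "length e = length A" "n = (\<Sum>i<length A. e ! i * A ! i)"
    using assms(2) unfolding representable_def by blast
  let ?c = "map (\<lambda>i. c ! i + e ! i) [0..<length A]"
  have "(\<Sum>i<length A. ?c ! i * A ! i) = (\<Sum>i<length A. c ! i * A ! i + e ! i * A ! i)"
    by (rule sum.cong) (auto simp: algebra_simps)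
  also have "\<dots> = m + n" using c e by (simp add: sum.distrib)
  finally show ?thesis unfolding representable_def
    by (intro exI[of _ ?c]) auto
qed

lemma representable_mult:
  assumes "representable A m"
  shows "representable A (j * m)"
  by (induction j) (auto intro: representable_0 representable_add assms)

lemma representable_nth:
  assumes "i < length A"
  shows "representable A (A ! i)"
proof -
  let ?c = "(replicate (length A) 0)[i := 1]"
  have "(\<Sum>j<length A. ?c ! j * A ! j) = (\<Sum>j<length A. if j = i then A ! i else 0)"
    by (rule sum.cong) (auto simp: assms nth_list_update)
  also have "\<dots> = A ! i" using assms by simp
  finally show ?thesis unfolding representable_def
    by (intro exI[of _ ?c]) auto
qed

lemma card_less_cong:
  fixes m W :: nat
  assumes "0 < m"
  shows "card {n. n < W \<and> [W = n] (mod m)} = W div m"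
proof -
  have "{n. n < W \<and> [W = n] (mod m)} = (\<lambda>j. j * m + W mod m) ` {..<W div m}"
  proof (intro equalityI subsetI)
    fix n assume "n \<in> {n. n < W \<and> [W = n] (mod m)}"
    then have "n < W" and "n = n div m * m + W mod m"
      by (auto simp: cong_def)
    moreover have "W = W div m * m + W mod m" by simp
    ultimately have "n div m < W div m" by (metis add_less_cancel_right mult_less_cancel2)
    then show "n \<in> (\<lambda>j. j * m + W mod m) ` {..<W div m}"
      using \<open>n = _\<close> by blast
  next
    fix n assume "n \<in> (\<lambda>j. j * m + W mod m) ` {..<W div m}"
    then obtain j where "j < W div m" and n: "n = j * m + W mod m" by blast
    then have "Suc j * m \<le> W div m * m" by (intro mult_le_mono1) simp
    then have "j * m + m \<le> W div m * m" by simp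
    moreover have "W = W div m * m + W mod m" by simp
    ultimately have "n < W" using n assms by linarith
    then show "n \<in> {n. n < W \<and> [W = n] (mod m)}" using n by (simp add: cong_def)
  qed
  moreover have "inj_on (\<lambda>j. j * m + W mod m) {..<W div m}"
    using assms by (auto simp: inj_on_def)
  ultimately show ?thesis by (simp add: card_image)
qed

(* The Apery set of A with respect to m, enumerated by w along some bijection of {..<m}
   onto the residues modulo m. *)
locale apery_set =
  fixes A :: "nat list" and m :: nat and w :: "nat \<Rightarrow> nat"
  assumes m_pos: "0 < m"
    and index_unique: "\<And>n. \<exists>!x. x < m \<and> [w x = n] (mod m)"
    and representable_iff:
      "\<And>n x. x < m \<Longrightarrow> [w x = n] (mod m) \<Longrightarrow> representable A n \<longleftrightarrow> w x \<le> n"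
begin

lemma NR_eq_UN: "NR A = (\<Union>x<m. {n. n < w x \<and> [w x = n] (mod m)})"
proof (intro equalityI subsetI)
  fix n assume "n \<in> NR A"
  obtain x where x: "x < m" "[w x = n] (mod m)" using index_unique[of n] by blast
  with \<open>n \<in> NR A\<close> have "n < w x" using representable_iff by (auto simp: NR_def)
  with x show "n \<in> (\<Union>x<m. {n. n < w x \<and> [w x = n] (mod m)})" by blast
next
  fix n assume "n \<in> (\<Union>x<m. {n. n < w x \<and> [w x = n] (mod m)})"
  then show "n \<in> NR A" using representable_iff by (auto simp: NR_def)
qed

lemma genus_eq_sum: "genus A = (\<Sum>x<m. w x div m)"
proof -
  have "genus A = (\<Sum>x<m. card {n. n < w x \<and> [w x = n] (mod m)})"
    unfolding genus_def NR_eq_UN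
  proof (rule card_UN_disjoint)
    show "\<forall>x\<in>{..<m}. \<forall>y\<in>{..<m}. x \<noteq> y \<longrightarrow>
        {n. n < w x \<and> [w x = n] (mod m)} \<inter> {n. n < w y \<and> [w y = n] (mod m)} = {}"
      using index_unique by blast
  qed auto
  also have "\<dots> = (\<Sum>x<m. w x div m)" using card_less_cong[OF m_pos] by simp
  finally show ?thesis .
qed

lemma frob_eq_Max:
  assumes "m \<le> Max (w ` {..<m})"
  shows "frob A = int (Max (w ` {..<m})) - int m"
proof -
  let ?W = "Max (w ` {..<m})"
  obtain x0 where x0: "x0 < m" "w x0 = ?W"
    using Max_in[of "w ` {..<m}"] m_pos by fastforce
  have "[w x0 = ?W - m] (mod m)"
    using assms x0(2) by (simp add: cong_def le_mod_geq)
  then have "?W - m \<in> NR A"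
    unfolding NR_eq_UN using x0 m_pos assms by (auto intro!: bexI[of _ x0])
  moreover have "n \<le> ?W - m" if "n \<in> NR A" for n
  proof -
    obtain x where x: "x < m" "n < w x" "[w x = n] (mod m)"
      using \<open>n \<in> NR A\<close> unfolding NR_eq_UN by blast
    then obtain q where q: "w x = q * m + n" using cong_le_nat[of n "w x" m] by auto
    with x(2) have "n + m \<le> w x" by (cases q) auto
    moreover have "w x \<le> ?W" using x(1) by simp
    ultimately show ?thesis by linarith
  qed
  moreover have "finite (NR A)" unfolding NR_eq_UN by auto
  ultimately have "Max (NR A) = ?W - m" by (intro Max_eqI) auto
  then show ?thesis unfolding frob_def using assms by simp
qed

end

definition min_gens :: "nat \<Rightarrow> nat \<Rightarrow> nat" where
  "min_gens k x = x mod 2 + (x div 2 + k - 1) div k"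

lemma ceiling_div_le_iff:
  fixes k y v :: nat
  assumes "0 < k"
  shows "(y + k - 1) div k \<le> v \<longleftrightarrow> y \<le> k * v"
proof -
  have "(y + k - 1) div k < Suc v \<longleftrightarrow> y + k - 1 < Suc v * k"
    using assms by (rule div_less_iff_less_mult)
  then show ?thesis using assms by (auto simp: algebra_simps)
qed

lemma min_gens_odd: "min_gens k (2*y + 1) = min_gens k (2*y) + 1"
  by (simp add: min_gens_def)

lemma min_gens_le:
  assumes "0 < k" and "y \<le> k * v"
  shows "min_gens k (u + 2*y) \<le> u + v"
proof -
  have "u div 2 \<le> k * (u div 2)" using assms(1) by simp
  then have "u div 2 + y \<le> k * (u div 2 + v)" unfolding distrib_left using assms(2) by linarith
  then have "(u div 2 + y + k - 1) div k \<le> u div 2 + v"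
    using ceiling_div_le_iff[OF assms(1)] by blast
  moreover have "min_gens k (u + 2*y) = u mod 2 + (u div 2 + y + k - 1) div k"
    by (simp add: min_gens_def ac_simps)
  moreover have "u mod 2 + u div 2 \<le> u" by presburger
  ultimately show ?thesis by linarith
qed

lemma min_gens_mono:
  assumes "x \<le> X" and "even x = even X"
  shows "min_gens k x \<le> min_gens k X"
proof -
  have "x mod 2 = X mod 2" using assms(2) by (simp add: mod2_eq_if)
  moreover have "x div 2 \<le> X div 2" using assms(1) by (rule div_le_mono)
  ultimately show ?thesis unfolding min_gens_def by (simp add: div_le_mono)
qed

lemma min_gens_mono_far:
  assumes "0 < k" and "x + 2*k \<le> X"
  shows "min_gens k x \<le> min_gens k X"
proof -
  define c where "c = (x div 2 + k - 1) div k"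
  have "k * c \<le> x div 2 + k - 1" unfolding c_def by (simp add: mult.commute)
  also have "\<dots> < X div 2" using assms by linarith
  finally have "c < (X div 2 + k - 1) div k"
    using ceiling_div_le_iff[OF assms(1), of "X div 2" c] by linarith
  then show ?thesis unfolding min_gens_def c_def[symmetric] by linarith
qed

lemma min_gens_block:
  assumes "0 < k" and "1 \<le> i" and "i \<le> 2*k"
  shows "min_gens k (2*k*s + i) = (if even i \<or> i = 1 then s + 1 else s + 2)"
proof -
  have "(2*k*s + i) div 2 = i div 2 + k * s" by simp
  then have "(2*k*s + i) div 2 + k - 1 = (i div 2 + k - 1) + k * s" using assms(1) by linarith
  then have "((2*k*s + i) div 2 + k - 1) div k = s + (i div 2 + k - 1) div k"
    using assms(1) by (simp only: div_mult_self2)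
  moreover have "(i div 2 + k - 1) div k = (if i = 1 then 0 else 1)"
    using assms by (auto intro: div_nat_eqI)
  moreover have "(2*k*s + i) mod 2 = i mod 2" by (simp add: mult.assoc)
  ultimately show ?thesis unfolding min_gens_def by (auto simp: odd_iff_mod_2_eq_one)
qed

lemma min_gens_pos:
  assumes "0 < k" and "0 < x"
  shows "0 < min_gens k x"
proof -
  have "0 < x mod 2 \<or> 0 < x div 2" using assms(2) by presburger
  moreover have "0 < x div 2 \<Longrightarrow> 0 < (x div 2 + k - 1) div k"
    using ceiling_div_le_iff[OF assms(1), of "x div 2" 0] by simp
  ultimately show ?thesis unfolding min_gens_def by auto
qed

lemma length_tupA: "length (tupA a h d k) = k + 2"
  by (simp add: tupA_def)

lemma tupA_nth_0: "tupA a h d k ! 0 = a"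
  by (simp add: tupA_def)

lemma tupA_nth_1: "tupA a h d k ! Suc 0 = h*a + d"
  by (simp add: tupA_def)

lemma tupA_nth_Suc_Suc: "j < k \<Longrightarrow> tupA a h d k ! Suc (Suc j) = h*a + 2*(j + 1)*d"
  by (simp add: tupA_def del: upt_Suc)

lemma representable_tupA_decompose:
  assumes "representable (tupA a h d k) n"
  shows "\<exists>c u v y. n = c*a + (u + v)*h*a + (u + 2*y)*d \<and> v \<le> y \<and> y \<le> k*v"
proof -
  let ?A = "tupA a h d k"
  obtain c where c: "length c = k + 2" "n = (\<Sum>i<k + 2. c ! i * ?A ! i)"
    using assms unfolding representable_def length_tupA by blast
  define v where "v = (\<Sum>j<k. c ! Suc (Suc j))"
  define y where "y = (\<Sum>j<k. (j + 1) * c ! Suc (Suc j))"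
  have "n = (\<Sum>i<Suc (Suc k). c ! i * ?A ! i)"
    using c(2) by (simp add: numeral_2_eq_2)
  also have "\<dots> = c!0 * a + c!1 * (h*a + d) + (\<Sum>j<k. c ! Suc (Suc j) * ?A ! Suc (Suc j))"
    unfolding sum.lessThan_Suc_shift by (simp add: tupA_nth_0 tupA_nth_1)
  also have "(\<Sum>j<k. c ! Suc (Suc j) * ?A ! Suc (Suc j)) =
      (\<Sum>j<k. c ! Suc (Suc j) * (h*a) + ((j + 1) * c ! Suc (Suc j)) * (2*d))"
    by (rule sum.cong) (auto simp: tupA_nth_Suc_Suc algebra_simps)
  also have "\<dots> = v * (h*a) + y * (2*d)"
    unfolding v_def y_def by (simp only: sum.distrib sum_distrib_right)
  finally have "n = c!0 * a + (c!1 + v)*h*a + (c!1 + 2*y)*d"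
    by (simp add: algebra_simps)
  moreover have "v \<le> y" unfolding v_def y_def by (rule sum_mono) simp
  moreover have "y \<le> k * v"
    unfolding v_def y_def sum_distrib_left by (rule sum_mono, rule mult_le_mono1) simp
  ultimately show ?thesis by blast
qed

lemma representable_tupA_tail:
  assumes "v \<le> y" and "y \<le> k*v"
  shows "representable (tupA a h d k) (v*h*a + 2*y*d)"
  using assms
proof (induction v arbitrary: y)
  case 0
  then show ?case by (simp add: representable_0)
next
  case (Suc v)
  \<comment> \<open>Removing the generator ha+2jd with j = min k (y - v) preserves v \<le> y \<le> k v.\<close>
  have "0 < k" using Suc.prems by (cases k) auto
  then have "v \<le> k*v" by simp
  define j where "j = min k (y - v)"
  have j: "1 \<le> j" "j \<le> k" "j \<le> y" "v \<le> y - j" "y - j \<le> k*v"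
    using Suc.prems \<open>0 < k\<close> unfolding j_def by (auto simp: min_def)
  then obtain j' where j': "j = Suc j'" by (cases j) auto
  have "representable (tupA a h d k) (tupA a h d k ! Suc (Suc j'))"
    using j j' by (intro representable_nth) (simp add: length_tupA)
  then have "representable (tupA a h d k) (h*a + 2*j*d)"
    using j j' by (simp add: tupA_nth_Suc_Suc)
  moreover have "representable (tupA a h d k) (v*h*a + 2*(y - j)*d)"
    using Suc.IH j by blast
  ultimately have "representable (tupA a h d k) (h*a + 2*j*d + (v*h*a + 2*(y - j)*d))"
    by (rule representable_add)
  moreover have "h*a + 2*j*d + (v*h*a + 2*(y - j)*d) = Suc v*h*a + 2*((y - j) + j)*d"
    by (simp add: algebra_simps)
  ultimately show ?case using \<open>j \<le> y\<close> by simp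
qed

lemma representable_tupA_iff:
  "representable (tupA a h d k) n \<longleftrightarrow>
    (\<exists>c u v y. n = c*a + (u + v)*h*a + (u + 2*y)*d \<and> v \<le> y \<and> y \<le> k*v)"
proof
  assume "\<exists>c u v y. n = c*a + (u + v)*h*a + (u + 2*y)*d \<and> v \<le> y \<and> y \<le> k*v"
  then obtain c u v y where n: "n = c*a + (u + v)*h*a + (u + 2*y)*d" and "v \<le> y" "y \<le> k*v"
    by blast
  have ra: "representable (tupA a h d k) a"
    using representable_nth[of 0 "tupA a h d k"] by (simp add: length_tupA tupA_nth_0)
  have rb: "representable (tupA a h d k) (h*a + d)"
    using representable_nth[of "Suc 0" "tupA a h d k"] by (simp add: length_tupA tupA_nth_1)
  have rt: "representable (tupA a h d k) (v*h*a + 2*y*d)"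
    using \<open>v \<le> y\<close> \<open>y \<le> k*v\<close> by (rule representable_tupA_tail)
  have "representable (tupA a h d k) (c*a + u*(h*a + d) + (v*h*a + 2*y*d))"
    using representable_add[OF representable_add[OF representable_mult[OF ra]
        representable_mult[OF rb]] rt] .
  moreover have "c*a + u*(h*a + d) + (v*h*a + 2*y*d) = n"
    unfolding n by (simp add: algebra_simps)
  ultimately show "representable (tupA a h d k) n" by simp
qed (rule representable_tupA_decompose)

lemma div_add_div_complement:
  fixes a d x :: nat
  assumes "coprime a d" and "0 < x" and "x < a"
  shows "x * d div a + (a - x) * d div a = d - 1"
proof -
  have "\<not> a dvd x * d"
    using assms by (auto simp: coprime_dvd_mult_left_iff dest: dvd_imp_le)
  then have nz: "int (x * d) mod int a \<noteq> 0"
    by (metis dvd_eq_mod_eq_0 int_dvd_int_iff)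
  have "int ((a - x) * d div a) = (- int (x * d) + int d * int a) div int a"
    using assms(3) by (simp add: zdiv_int of_nat_diff algebra_simps)
  also have "\<dots> = int d + (- int (x * d)) div int a"
    using assms(3) by (intro div_mult_self1) simp
  also have "(- int (x * d)) div int a = - (int (x * d) div int a) - 1"
    using assms(3) nz by (simp add: zdiv_zminus1_eq_if)
  finally have "int (x * d div a + (a - x) * d div a) = int d - 1"
    by (simp add: zdiv_int)
  then show ?thesis by linarith
qed

lemma sum_mult_div_coprime:
  fixes a d :: nat
  assumes "coprime a d" and "0 < a"
  shows "2 * (\<Sum>x<a. x * d div a) = (a - 1) * (d - 1)"
proof -
  have "(\<Sum>x<a. x * d div a) = (\<Sum>x\<in>{1..<a}. x * d div a)"
    using assms(2) by (simp add: lessThan_atLeast0 sum.atLeast_Suc_lessThan)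
  moreover have "(\<Sum>x\<in>{1..<a}. x * d div a) = (\<Sum>x\<in>{1..<a}. (a - x) * d div a)"
    by (subst sum.atLeastLessThan_rev) simp
  ultimately have "2 * (\<Sum>x<a. x * d div a) = (\<Sum>x\<in>{1..<a}. x * d div a + (a - x) * d div a)"
    by (simp add: sum.distrib)
  also have "\<dots> = (\<Sum>x\<in>{1..<a}. d - 1)"
    using div_add_div_complement[OF assms(1)] by (intro sum.cong) auto
  finally show ?thesis by simp
qed

lemma sum_min_gens_partial_period:
  assumes "0 < k" and "i \<le> 2*k"
  shows "(\<Sum>x<2*k*s + 1 + i. min_gens k x) =
    (\<Sum>x<2*k*s + 1. min_gens k x) + i * (s + 1) + (i - 1) div 2"
  using assms(2)
proof (induction i)
  case (Suc i)
  have "(\<Sum>x<2*k*s + 1 + Suc i. min_gens k x) =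
      (\<Sum>x<2*k*s + 1 + i. min_gens k x) + min_gens k (2*k*s + Suc i)"
    by simp
  also have "min_gens k (2*k*s + Suc i) = (if even (Suc i) \<or> Suc i = 1 then s + 1 else s + 2)"
    using Suc.prems by (intro min_gens_block[OF assms(1)]) auto
  finally show ?case using Suc by (cases "even i"; cases i) (auto elim!: evenE oddE)
qed simp

lemma sum_min_gens_periods:
  assumes "0 < k"
  shows "(\<Sum>x<2*k*s + 1. min_gens k x) + s = k*s*s + 2*k*s"
proof (induction s)
  case 0
  show ?case using assms by (simp add: min_gens_def)
next
  case (Suc s)
  have "2*k*Suc s + 1 = 2*k*s + 1 + 2*k" by simp
  then have "(\<Sum>x<2*k*Suc s + 1. min_gens k x) =
      (\<Sum>x<2*k*s + 1. min_gens k x) + 2*k*(s + 1) + (2*k - 1) div 2"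
    by (simp only: sum_min_gens_partial_period[OF assms order_refl])
  moreover have "(2*k - 1) div 2 = k - 1" by presburger
  ultimately show ?case using Suc assms by (simp add: algebra_simps)
qed

lemma ceiling_half:
  fixes t :: nat
  assumes "1 \<le> t"
  shows "real_of_int \<lceil>real t / 2\<rceil> = real ((t - 1) div 2) + 1"
proof -
  have "\<lceil>real t / 2\<rceil> = int ((t - 1) div 2) + 1"
  proof (rule ceiling_unique)
    have "real t = 2 * real ((t - 1) div 2) + (if even t then 2 else 1)"
    proof (cases "even t")
      case True
      then obtain q where "t = 2 * q" by blast
      then show ?thesis using True assms by (cases q) auto
    qed (auto elim!: oddE)
    then show "real_of_int (int ((t - 1) div 2) + 1) - 1 < real t / 2"
      and "real t / 2 \<le> real_of_int (int ((t - 1) div 2) + 1)"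
      by (auto split: if_splits)
  qed
  then show ?thesis by simp
qed

locale tupA_setting =
  fixes a h d k :: nat
  assumes coprime_ad: "coprime a d" and h_pos: "0 < h" and d_pos: "0 < d" and k_pos: "0 < k"
    and a_ge: "2*k + 1 \<le> a"
begin

definition apery :: "nat \<Rightarrow> nat" where
  "apery x = min_gens k x * h * a + x * d"

lemma apery_cong: "[apery x = x * d] (mod a)"
  by (simp add: apery_def cong_def)

lemma representable_apery: "representable (tupA a h d k) (apery x)"
proof -
  define y where "y = x div 2"
  define v where "v = (y + k - 1) div k"
  have "y \<le> k * v" using ceiling_div_le_iff[OF k_pos, of y v] by (simp add: v_def)
  moreover have "v \<le> y" using ceiling_div_le_iff[OF k_pos, of y y] k_pos by (simp add: v_def)
  moreover have "apery x = 0*a + (x mod 2 + v)*h*a + (x mod 2 + 2*y)*d"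
    unfolding apery_def min_gens_def v_def y_def by simp
  ultimately show ?thesis unfolding representable_tupA_iff by blast
qed

lemma apery_le_representable:
  assumes "representable (tupA a h d k) n" and "x < a" and "[apery x = n] (mod a)"
  shows "apery x \<le> n"
proof -
  obtain c u v y where n: "n = c*a + (u + v)*h*a + (u + 2*y)*d" and "y \<le> k*v"
    using assms(1) unfolding representable_tupA_iff by blast
  define X where "X = u + 2*y"
  have "min_gens k X \<le> u + v" unfolding X_def using k_pos \<open>y \<le> k*v\<close> by (rule min_gens_le)
  have "[x * d = X * d] (mod a)"
    using assms(3) apery_cong[of x] unfolding n X_def
    by (metis cong_def cong_sym mod_mult_self3 add.assoc)
  then have "[x = X] (mod a)"
    using coprime_ad by (simp add: cong_mult_rcancel_nat coprime_commute)
  then have "X mod a = x" using assms(2) by (simp add: cong_def)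
  then obtain q where X: "X = q * a + x" by (metis div_mult_mod_eq)
  have "min_gens k x \<le> min_gens k X"
  proof (cases q)
    case (Suc q')
    then have "x + 2*k \<le> X" using X a_ge by simp
    then show ?thesis by (rule min_gens_mono_far[OF k_pos])
  qed (simp add: X)
  with \<open>min_gens k X \<le> u + v\<close> have "min_gens k x * h * a \<le> (u + v) * h * a" by simp
  moreover have "x * d \<le> X * d" using X by simp
  ultimately show ?thesis unfolding apery_def n X_def by linarith
qed

sublocale apery_set "tupA a h d k" a apery
proof
  show "0 < a" using a_ge by simp
  show "\<exists>!x. x < a \<and> [apery x = n] (mod a)" for n
    using cong_solve_unique[of d a n] coprime_ad \<open>0 < a\<close> apery_cong
    by (simp add: coprime_commute mult.commute cong_def)
  show "representable (tupA a h d k) n \<longleftrightarrow> apery x \<le> n"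
    if "x < a" and "[apery x = n] (mod a)" for n x
  proof
    assume "apery x \<le> n"
    with that(2) obtain q where "n = q * a + apery x" by (metis cong_le_nat cong_sym)
    moreover have "representable (tupA a h d k) (q * a)"
      using representable_mult representable_nth[of 0 "tupA a h d k"]
      by (simp add: length_tupA tupA_nth_0)
    ultimately show "representable (tupA a h d k) n"
      using representable_add representable_apery by simp
  qed (use that apery_le_representable in blast)
qed

lemma apery_mono:
  assumes "x \<le> X" and "even x = even X"
  shows "apery x \<le> apery X"
  using min_gens_mono[OF assms, of k] assms(1) unfolding apery_def
  by (intro add_mono mult_le_mono1) simp_all

lemma Max_apery: "Max (apery ` {..<a}) = max (apery (a - 1)) (apery (a - 2))"
proof (rule Max_eqI)
  show "y \<le> max (apery (a - 1)) (apery (a - 2))" if "y \<in> apery ` {..<a}" for y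
  proof -
    obtain x where "x < a" and y: "y = apery x" using \<open>y \<in> apery ` {..<a}\<close> by blast
    then have "even x = even (a - 1) \<or> x \<le> a - 2 \<and> even x = even (a - 2)"
      using a_ge k_pos by presburger
    then have "apery x \<le> apery (a - 1) \<or> apery x \<le> apery (a - 2)"
      using \<open>x < a\<close> apery_mono by fastforce
    then show ?thesis unfolding y by linarith
  qed
  show "max (apery (a - 1)) (apery (a - 2)) \<in> apery ` {..<a}"
    using a_ge by (simp add: max_def)
qed simp

lemma frob_tupA: "frob (tupA a h d k) = int (max (apery (a - 1)) (apery (a - 2))) - int a"
proof -
  have "0 < min_gens k (a - 1)" using a_ge k_pos by (intro min_gens_pos k_pos) simp
  then have "1 * a \<le> min_gens k (a - 1) * h * a"
    using h_pos by (intro mult_le_mono1) simp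
  also have "\<dots> \<le> apery (a - 1)" by (simp add: apery_def)
  finally have "a \<le> Max (apery ` {..<a})" unfolding Max_apery by simp
  then show ?thesis using frob_eq_Max Max_apery by simp
qed

lemma frob_tupA_even:
  assumes "even a" and st: "a - 1 = 2*k*s + t" "1 \<le> t" "t \<le> 2*k"
  shows "frob (tupA a h d k) =
    (if t \<noteq> 1
     then int (h*a) * (int ((a-2) div (2*k)) + 2) + int (a-1) * int d - int a
     else int (h*a) * (int ((a-2) div (2*k)) + 1) + int (a-1) * int d - int a)"
proof -
  have "odd (a - 1)" using assms(1) a_ge by simp
  then have "odd (2*(k*s) + t)" unfolding st(1) by (simp add: mult.assoc)
  then have "odd t" by simp
  have s: "(a - 2) div (2*k) = s"
    using st a_ge by (intro div_nat_eqI) (auto simp: algebra_simps)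
  have gens: "min_gens k (a - 1) = (if t = 1 then s + 1 else s + 2)"
    using min_gens_block[OF k_pos st(2,3), of s] st(1) \<open>odd t\<close> by auto
  have "a - 2 = 2 * ((a - 2) div 2)" and "a - 1 = 2 * ((a - 2) div 2) + 1"
    using assms(1) a_ge k_pos by presburger+
  then have "min_gens k (a - 1) = min_gens k (a - 2) + 1"
    by (metis min_gens_odd)
  then have "apery (a - 2) \<le> apery (a - 1)"
    unfolding apery_def by (intro add_mono mult_le_mono1) auto
  then have "frob (tupA a h d k) = int (min_gens k (a - 1) * h * a + (a - 1) * d) - int a"
    unfolding frob_tupA by (simp add: apery_def max_def)
  moreover have "int (a - 1) = int a - 1" using a_ge by simp
  ultimately show ?thesis unfolding gens s by (simp; simp add: algebra_simps)
qed

lemma frob_tupA_odd: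
  assumes "odd a" and st: "a - 2 = 2*k*s + t" "1 \<le> t" "t \<le> 2*k"
  shows "frob (tupA a h d k) =
    (if t \<noteq> 1
     then max (int (h*a) * (int ((a-2) div (2*k)) + 1) + int (a-1) * int d - int a)
              (int (h*a) * (int ((a-3) div (2*k)) + 2) + int (a-2) * int d - int a)
     else int (h*a) * (int ((a-2) div (2*k)) + 1) + int (a-1) * int d - int a)"
proof -
  have "odd (a - 2)" using assms(1) a_ge k_pos by simp
  then have "odd (2*(k*s) + t)" unfolding st(1) by (simp add: mult.assoc)
  then have "odd t" by simp
  with st(3) have "t + 1 \<le> 2*k" by presburger
  have s: "(a - 2) div (2*k) = s" "(a - 3) div (2*k) = s"
    using st \<open>t + 1 \<le> 2*k\<close> a_ge by (auto intro!: div_nat_eqI simp: algebra_simps)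
  have gens2: "min_gens k (a - 2) = (if t = 1 then s + 1 else s + 2)"
    using min_gens_block[OF k_pos st(2,3), of s] st(1) \<open>odd t\<close> by auto
  have "a - 1 = 2*k*s + (t + 1)" using st a_ge by simp
  then have gens1: "min_gens k (a - 1) = s + 1"
    using min_gens_block[OF k_pos _ \<open>t + 1 \<le> 2*k\<close>, of s] \<open>odd t\<close> by auto
  have ints: "int (a - 1) = int a - 1" "int (a - 2) = int a - 2" using a_ge k_pos by auto
  show ?thesis
  proof (cases "t = 1")
    case True
    then have "apery (a - 2) \<le> apery (a - 1)"
      unfolding apery_def gens1 gens2 by (intro add_mono mult_le_mono1) auto
    then have "frob (tupA a h d k) = int (min_gens k (a - 1) * h * a + (a - 1) * d) - int a"
      unfolding frob_tupA by (simp add: apery_def max_def)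
    then show ?thesis using True ints unfolding gens1 s by (simp; simp add: algebra_simps)
  next
    case False
    have "frob (tupA a h d k) = max (int (apery (a - 1))) (int (apery (a - 2))) - int a"
      unfolding frob_tupA by (simp add: of_nat_max)
    then show ?thesis using False ints unfolding apery_def gens1 gens2 s
      by (simp; simp add: algebra_simps max_diff_distrib_left)
  qed
qed

lemma genus_tupA:
  "let s = (a-2) div (2*k); t = a - 1 - 2*k*s in
     real (genus (tupA a h d k)) =
       real h * (real s ^ 2 * real k + real s * real t - real s - 1)
       + (real a - 1) * (real h + real d / 2 - 1/2)
       + real h * real_of_int \<lceil>real t / 2\<rceil>"
proof -
  define s where "s = (a - 2) div (2*k)"
  define t where "t = a - 1 - 2*k*s"
  have "a - 2 = 2*k*s + (a - 2) mod (2*k)" unfolding s_def by simp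
  moreover have "(a - 2) mod (2*k) < 2*k" using k_pos by simp
  ultimately have a: "a = 2*k*s + 1 + t" and t: "1 \<le> t" "t \<le> 2*k"
    using a_ge unfolding t_def by linarith+
  define M where "M = (\<Sum>x<a. min_gens k x)"
  define F where "F = (\<Sum>x<a. x * d div a)"
  have "genus (tupA a h d k) = (\<Sum>x<a. min_gens k x * h + x * d div a)"
    using a_ge by (simp add: genus_eq_sum apery_def mult.assoc[symmetric])
  also have "\<dots> = h * M + F"
    unfolding M_def F_def by (simp add: sum.distrib sum_distrib_left mult.commute)
  finally have "real (genus (tupA a h d k)) = real h * real M + real F"
    by simp
  moreover have M_eq: "M + s = k*s*s + 2*k*s + t*(s + 1) + (t - 1) div 2"
    using sum_min_gens_partial_period[OF k_pos t(2), of s] sum_min_gens_periods[OF k_pos, of s] a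
    unfolding M_def by simp
  have "real M = real k * real s * real s + 2 * real k * real s + real t * (real s + 1)
      + real ((t - 1) div 2) - real s"
    using arg_cong[OF M_eq, of real] by (simp add: algebra_simps)
  moreover have "2 * real F = (real a - 1) * (real d - 1)"
    using arg_cong[OF sum_mult_div_coprime[OF coprime_ad], of real] a_ge d_pos
    unfolding F_def by simp
  moreover have "real a = 2 * real k * real s + 1 + real t" using a by simp
  ultimately show ?thesis
    unfolding Let_def s_def[symmetric] t_def[symmetric] ceiling_half[OF t(1)]
    by (simp add: field_simps power2_eq_square)
qed

end

theorem mainTheorem9:
  fixes a h d k :: nat
  assumes "coprime a d" and "a > 0" and "h > 0" and "d > 0" and "k > 0"
    and "a > 2" and "2 \<le> 2*k" and "2*k \<le> a - 1"
  shows
   "(even a \<longrightarrow> (\<forall>s t. a - 1 = 2*k*s + t \<and> 1 \<le> t \<and> t \<le> 2*k \<longrightarrow>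
        frob (tupA a h d k) =
          (if t \<noteq> 1
           then int (h*a) * (int ((a-2) div (2*k)) + 2) + int (a-1) * int d - int a
           else int (h*a) * (int ((a-2) div (2*k)) + 1) + int (a-1) * int d - int a))) \<and>
    (odd a \<longrightarrow> (\<forall>s t. a - 2 = 2*k*s + t \<and> 1 \<le> t \<and> t \<le> 2*k \<longrightarrow>
        frob (tupA a h d k) =
          (if t \<noteq> 1
           then max (int (h*a) * (int ((a-2) div (2*k)) + 1) + int (a-1) * int d - int a)
                    (int (h*a) * (int ((a-3) div (2*k)) + 2) + int (a-2) * int d - int a)
           else int (h*a) * (int ((a-2) div (2*k)) + 1) + int (a-1) * int d - int a))) \<and>
    (let s = (a-2) div (2*k); t = a - 1 - 2*k*s in
       real (genus (tupA a h d k)) =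
         real h * (real s ^ 2 * real k + real s * real t - real s - 1)
         + (real a - 1) * (real h + real d / 2 - 1/2)
         + real h * real_of_int \<lceil>real t / 2\<rceil>)"
proof -
  interpret tupA_setting a h d k
    using assms by unfold_locales auto
  show ?thesis
    using frob_tupA_even frob_tupA_odd genus_tupA by blast
qed

end
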